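(* Let $U$ be a countably infinite universe, $\mathcal{C}=(L_1,L_2,\ldots)$ a countably infinite collection of languages over $U$, $\mathcal{A}=\{A_g\}_{g\in[K]}$ a partition of $U$ into finitely many groups, $\alpha\in[0,1]$, and consider the Representative Procedure in the context. For every $i\ge1$ and every $t\ge i$, let $k$ be the position of the entry $L_i$ in $\mathcal{C}'_t=(L'_1,\ldots,L'_t)$ at the end of iteration $t$. Then $T(L_i)$ is a set of maximum size among all sets $T$ satisfying: $T$ is finite, and there exists a subcollection $\mathcal{D}$ of the entries $(L'_1,\ldots,L'_k)$ that includes $L'_k$, such that every $L\in\mathcal{D}$ contains $T$ and $T$ suffers group scarcity with respect to $\mathcal{D}$ and $\mathcal{A}$.
   Context: A language is an infinite subset of $U$; a collection is a sequence of languages (repetitions allowed, entries distinguished by index). For a finite nonempty $T\subseteq U$, $\mathrm{emp}_T$ is the uniform distribution on $T$, and for a distribution $D$ on $U$, $D^{\mathcal{A}}(g)=\Pr_{x\sim D}[x\in A_g]$. Scarce groups: for a collection $\mathcal{D}$ of languages and finite $T$, let $B=\{g\in[K]: A_g\cap((\bigcap_{L\in\mathcal{D}}L)\setminus T)=\emptyset\}$; $T$ suffers group scarcity w.r.t. $\mathcal{D}$ and $\mathcal{A}$ if some $g\in B$ has $\mathrm{emp}_T^{\mathcal{A}}(g)>\alpha$, or $\sum_{g\in B}\mathrm{emp}_T^{\mathcal{A}}(g)>\alpha(K-|B|)$. Representative Procedure. Set $\mathcal{C}'_0=()$. For $i=1,2,\ldots$: append $L_i$ to the end of $\mathcal{C}'_{i-1}$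 to get $\mathcal{C}'_i=(L'_1,\ldots,L'_i)$, set $j=i$. Repeat: (i) let $T$ be a finite (nonempty) set of largest size for which there is a subcollection $\mathcal{D}$ of the entries $(L'_1,\ldots,L'_j)$ including $L'_j$ with $T\subseteq L$ for all $L\in\mathcal{D}$ and $T$ suffering group scarcity w.r.t. $\mathcal{D}$ and $\mathcal{A}$; let $\mathcal{C}_{\mathrm{chk}}$ be such a $\mathcal{D}$ and $m_{\mathrm{chk}}=|T|$ ($0$ if none exists). (ii) If $j\le1$ or $m_{\mathrm{chk}}>m^\star_\alpha(L'_{j-1})$, stop. (iii) Otherwise swap the entries at positions $j-1,j$ in $\mathcal{C}'_i$, set $j\leftarrow j-1$, return to (i). On stopping, set $T(L_i)=T$, $\mathcal{C}(L_i)=\mathcal{C}_{\mathrm{chk}}$, $m^\star_\alpha(L_i)=m_{\mathrm{chk}}$; the ordering $\mathcal{C}'_t$ at the end of iteration $t$ is the one obtained when the loop of iteration $t$ stops. *)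

theory Defs
  imports Complex_Main "HOL-Library.Countable_Set"
begin

text \<open>Groups are indexed by [K] = {1..K}; languages of the collection by 1,2,3,...
  An ordering C'_t is a list of original language indices; the entry at 0-based
  list position p is the language L (P ! p).\<close>

definition is_partition :: "nat \<Rightarrow> (nat \<Rightarrow> 'u set) \<Rightarrow> bool" where
  "is_partition K A \<longleftrightarrow>
     (\<forall>g\<in>{1..K}. A g \<noteq> {}) \<and>
     (\<forall>g\<in>{1..K}. \<forall>h\<in>{1..K}. g \<noteq> h \<longrightarrow> A g \<inter> A h = {}) \<and>
     (\<Union>g\<in>{1..K}. A g) = UNIV"

definition emp_grp :: "(nat \<Rightarrow> 'u set) \<Rightarrow> 'u set \<Rightarrow> nat \<Rightarrow> real" where
  "emp_grp A T g = real (card (T \<inter> A g)) / real (card T)"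

text \<open>Group scarcity of T w.r.t. a collection whose intersection is I.\<close>
definition scarce :: "nat \<Rightarrow> (nat \<Rightarrow> 'u set) \<Rightarrow> real \<Rightarrow> 'u set \<Rightarrow> 'u set \<Rightarrow> bool" where
  "scarce K A \<alpha> I T \<longleftrightarrow>
     (let B = {g\<in>{1..K}. A g \<inter> (I - T) = {}} in
       (\<exists>g\<in>B. emp_grp A T g > \<alpha>) \<or>
       (\<Sum>g\<in>B. emp_grp A T g) > \<alpha> * real (K - card B))"

definition feasible ::
  "(nat \<Rightarrow> 'u set) \<Rightarrow> nat \<Rightarrow> (nat \<Rightarrow> 'u set) \<Rightarrow> real \<Rightarrow> nat list \<Rightarrow> 'u set \<Rightarrow> bool" where
  "feasible L K A \<alpha> P T \<longleftrightarrow> finite T \<and> T \<noteq> {} \<and>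
     (\<exists>D. D \<subseteq> {..<length P} \<and> length P - 1 \<in> D \<and> (\<forall>p\<in>D. T \<subseteq> L (P ! p)) \<and>
          scarce K A \<alpha> (\<Inter>p\<in>D. L (P ! p)) T)"

text \<open>T is a feasible set of largest size; by convention T = {} (size 0) if none exists.\<close>
definition is_max_set ::
  "(nat \<Rightarrow> 'u set) \<Rightarrow> nat \<Rightarrow> (nat \<Rightarrow> 'u set) \<Rightarrow> real \<Rightarrow> nat list \<Rightarrow> 'u set \<Rightarrow> bool" where
  "is_max_set L K A \<alpha> P T \<longleftrightarrow>
     (feasible L K A \<alpha> P T \<and> (\<forall>T'. feasible L K A \<alpha> P T' \<longrightarrow> card T' \<le> card T)) \<or>
     (T = {} \<and> \<not> (\<exists>T'. feasible L K A \<alpha> P T'))"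

text \<open>A run of the Representative Procedure: ord t is C'_t (end of iteration t),
  Tsel i = T(L_i), mstar i = m*_alpha(L_i). In iteration i, L_i is appended and
  bubbled down to its final (1-based) position j; at every position j' with j < j' \<le> i
  the loop did not stop (m_chk \<le> m*(L'_{j'-1})), at position j it stopped.\<close>
definition rep_run ::
  "(nat \<Rightarrow> 'u set) \<Rightarrow> nat \<Rightarrow> (nat \<Rightarrow> 'u set) \<Rightarrow> real \<Rightarrow>
   (nat \<Rightarrow> nat list) \<Rightarrow> (nat \<Rightarrow> 'u set) \<Rightarrow> (nat \<Rightarrow> nat) \<Rightarrow> bool" where
  "rep_run L K A \<alpha> ord Tsel mstar \<longleftrightarrow>
     ord 0 = [] \<and>
     (\<forall>i\<ge>1. \<exists>j. 1 \<le> j \<and> j \<le> i \<and>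
        ord i = take (j - 1) (ord (i - 1)) @ [i] @ drop (j - 1) (ord (i - 1)) \<and>
        (\<forall>j'. j < j' \<and> j' \<le> i \<longrightarrow>
           (\<exists>T. is_max_set L K A \<alpha> (take (j' - 1) (ord (i - 1)) @ [i]) T \<and>
                card T \<le> mstar (ord (i - 1) ! (j' - 2)))) \<and>
        is_max_set L K A \<alpha> (take (j - 1) (ord (i - 1)) @ [i]) (Tsel i) \<and>
        mstar i = card (Tsel i) \<and>
        (j = 1 \<or> card (Tsel i) > mstar (ord (i - 1) ! (j - 2))))"

end

theory Submission
  imports Defs
begin

text \<open>Whether T is feasible for an entry a depends only on a and on the set of entries before it.
  When L_t is swapped past an entry a, the loop did not stop, so every set feasible for t placed
  right after a has size at most m*(a) = |T(a)|. A set that becomes feasible for a only because t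
  now precedes it has a witness collection containing t; that collection also witnesses feasibility
  for t placed right after a, so the set has size at most |T(a)|. Hence T(a) stays maximal, and
  entries before the insertion point of L_t are unaffected.\<close>

definition feasible_among ::
  "(nat \<Rightarrow> 'u set) \<Rightarrow> nat \<Rightarrow> (nat \<Rightarrow> 'u set) \<Rightarrow> real \<Rightarrow> nat set \<Rightarrow> nat \<Rightarrow> 'u set \<Rightarrow> bool" where
  "feasible_among L K A \<alpha> E a T \<longleftrightarrow> finite T \<and> T \<noteq> {} \<and>
     (\<exists>S. S \<subseteq> insert a E \<and> a \<in> S \<and> (\<forall>x\<in>S. T \<subseteq> L x) \<and> scarce K A \<alpha> (\<Inter>x\<in>S. L x) T)"

definition is_max_among ::
  "(nat \<Rightarrow> 'u set) \<Rightarrow> nat \<Rightarrow> (nat \<Rightarrow> 'u set) \<Rightarrow> real \<Rightarrow> nat set \<Rightarrow> nat \<Rightarrow> 'u set \<Rightarrow> bool" where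
  "is_max_among L K A \<alpha> E a T \<longleftrightarrow>
     (feasible_among L K A \<alpha> E a T \<and> (\<forall>T'. feasible_among L K A \<alpha> E a T' \<longrightarrow> card T' \<le> card T)) \<or>
     (T = {} \<and> \<not> (\<exists>T'. feasible_among L K A \<alpha> E a T'))"

lemma image_nth_positions_in:
  assumes "S \<subseteq> set P"
  shows "(!) P ` {p. p < length P \<and> P ! p \<in> S} = S"
proof
  show "S \<subseteq> (!) P ` {p. p < length P \<and> P ! p \<in> S}"
  proof
    fix x assume "x \<in> S"
    then obtain p where "p < length P" "P ! p = x"
      using assms by (metis in_set_conv_nth subsetD)
    with \<open>x \<in> S\<close> show "x \<in> (!) P ` {p. p < length P \<and> P ! p \<in> S}"
      by blast
  qed
qed auto

lemma feasible_snoc_iff: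
  "feasible L K A \<alpha> (xs @ [a]) T \<longleftrightarrow> feasible_among L K A \<alpha> (set xs) a T"
proof
  let ?P = "xs @ [a]"
  assume "feasible L K A \<alpha> ?P T"
  then obtain D where T: "finite T" "T \<noteq> {}" and D: "D \<subseteq> {..<length ?P}" "length xs \<in> D"
    "\<forall>p\<in>D. T \<subseteq> L (?P ! p)" "scarce K A \<alpha> (\<Inter>p\<in>D. L (?P ! p)) T"
    unfolding feasible_def by auto
  have "(!) ?P ` D \<subseteq> insert a (set xs)"
    using D(1) by (auto simp: nth_append)
  moreover have "a \<in> (!) ?P ` D"
    using D(2) by (metis image_eqI nth_append_length)
  moreover have "\<forall>x\<in>(!) ?P ` D. T \<subseteq> L x"
    using D(3) by blast
  moreover have "scarce K A \<alpha> (\<Inter>x\<in>(!) ?P ` D. L x) T"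
    using D(4) by (simp add: image_image)
  ultimately show "feasible_among L K A \<alpha> (set xs) a T"
    unfolding feasible_among_def using T by blast
next
  let ?P = "xs @ [a]"
  assume "feasible_among L K A \<alpha> (set xs) a T"
  then obtain S where T: "finite T" "T \<noteq> {}" and S: "S \<subseteq> insert a (set xs)" "a \<in> S"
    "\<forall>x\<in>S. T \<subseteq> L x" "scarce K A \<alpha> (\<Inter>x\<in>S. L x) T"
    unfolding feasible_among_def by blast
  define D where "D = {p. p < length ?P \<and> ?P ! p \<in> S}"
  have img: "(!) ?P ` D = S"
    unfolding D_def using S(1) by (intro image_nth_positions_in) auto
  have "(\<Inter>p\<in>D. L (?P ! p)) = (\<Inter>x\<in>S. L x)"
    by (simp flip: img add: image_image)
  moreover have "length xs \<in> D"
    unfolding D_def using S(2) by simp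
  moreover have "\<forall>p\<in>D. T \<subseteq> L (?P ! p)"
    unfolding D_def using S(3) by auto
  moreover have "D \<subseteq> {..<length ?P}"
    unfolding D_def by blast
  ultimately show "feasible L K A \<alpha> ?P T"
    unfolding feasible_def using T S(4) by (intro conjI exI[of _ D]) simp_all
qed

lemma is_max_set_snoc_iff:
  "is_max_set L K A \<alpha> (xs @ [a]) T \<longleftrightarrow> is_max_among L K A \<alpha> (set xs) a T"
  unfolding is_max_set_def is_max_among_def feasible_snoc_iff ..

lemma is_max_among_iff:
  "is_max_among L K A \<alpha> E a T \<longleftrightarrow>
     (feasible_among L K A \<alpha> E a T \<or> T = {}) \<and>
     (\<forall>T'. feasible_among L K A \<alpha> E a T' \<longrightarrow> card T' \<le> card T)"
proof -
  have "card T' \<noteq> 0" if "feasible_among L K A \<alpha> E a T'" for T'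
    using that unfolding feasible_among_def by simp
  then have "T = {} \<Longrightarrow> (\<forall>T'. feasible_among L K A \<alpha> E a T' \<longrightarrow> card T' \<le> card T) \<Longrightarrow>
      \<not> (\<exists>T'. feasible_among L K A \<alpha> E a T')"
    by fastforce
  then show ?thesis
    unfolding is_max_among_def by blast
qed

lemma is_max_among_card_le:
  "is_max_among L K A \<alpha> E a T \<Longrightarrow> feasible_among L K A \<alpha> E a T' \<Longrightarrow> card T' \<le> card T"
  by (simp add: is_max_among_iff)

lemma feasible_among_mono:
  "E \<subseteq> E' \<Longrightarrow> feasible_among L K A \<alpha> E a T \<Longrightarrow> feasible_among L K A \<alpha> E' a T"
  unfolding feasible_among_def by (meson insert_mono order_trans)

lemma feasible_among_insert_cases:
  assumes "feasible_among L K A \<alpha> (insert t E) a T"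
  shows "feasible_among L K A \<alpha> E a T \<or> feasible_among L K A \<alpha> (insert a E) t T"
proof -
  obtain S where T: "finite T" "T \<noteq> {}" and S: "S \<subseteq> insert a (insert t E)" "a \<in> S"
    "\<forall>x\<in>S. T \<subseteq> L x" "scarce K A \<alpha> (\<Inter>x\<in>S. L x) T"
    using assms unfolding feasible_among_def by blast
  show ?thesis
  proof (cases "t \<in> S")
    case True
    then have "feasible_among L K A \<alpha> (insert a E) t T"
      unfolding feasible_among_def using T S by (intro conjI exI[of _ S]) auto
    then show ?thesis ..
  next
    case False
    then have "feasible_among L K A \<alpha> E a T"
      unfolding feasible_among_def using T S by (intro conjI exI[of _ S]) auto
    then show ?thesis ..
  qed
qed

lemma is_max_among_insert:
  assumes "is_max_among L K A \<alpha> E a T"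
    and "\<And>T'. feasible_among L K A \<alpha> (insert a E) t T' \<Longrightarrow> card T' \<le> card T"
  shows "is_max_among L K A \<alpha> (insert t E) a T"
proof -
  have "card T' \<le> card T" if "feasible_among L K A \<alpha> (insert t E) a T'" for T'
    using feasible_among_insert_cases[OF that] assms is_max_among_card_le by blast
  moreover have "feasible_among L K A \<alpha> (insert t E) a T \<or> T = {}"
    using assms(1) feasible_among_mono[of E "insert t E"] unfolding is_max_among_iff by blast
  ultimately show ?thesis
    unfolding is_max_among_iff by blast
qed

definition entries_maximal ::
  "(nat \<Rightarrow> 'u set) \<Rightarrow> nat \<Rightarrow> (nat \<Rightarrow> 'u set) \<Rightarrow> real \<Rightarrow> (nat \<Rightarrow> 'u set) \<Rightarrow> nat list \<Rightarrow> bool" where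
  "entries_maximal L K A \<alpha> Tsel P \<longleftrightarrow>
     (\<forall>k<length P. is_max_among L K A \<alpha> (set (take k P)) (P ! k) (Tsel (P ! k)))"

lemma insert_at_after_nth:
  assumes "m \<le> p" "p < length P"
  shows "(take m P @ t # drop m P) ! Suc p = P ! p"
    and "set (take (Suc p) (take m P @ t # drop m P)) = insert t (set (take p P))"
proof -
  show "(take m P @ t # drop m P) ! Suc p = P ! p"
    using assms by (simp add: nth_append Suc_diff_le)
  have "take (Suc p) (take m P @ t # drop m P) = take m P @ t # take (p - m) (drop m P)"
    using assms by (simp add: Suc_diff_le)
  also have "set \<dots> = insert t (set (take m P @ take (p - m) (drop m P)))"
    by simp
  also have "take m P @ take (p - m) (drop m P) = take p P"
    using assms by (metis le_add_diff_inverse take_add)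
  finally show "set (take (Suc p) (take m P @ t # drop m P)) = insert t (set (take p P))" .
qed

lemma entries_maximal_insert_at:
  assumes maximal: "entries_maximal L K A \<alpha> Tsel P"
    and "m \<le> length P"
    and new: "is_max_among L K A \<alpha> (set (take m P)) t (Tsel t)"
    and passed: "\<And>p T. m \<le> p \<Longrightarrow> p < length P \<Longrightarrow>
       feasible_among L K A \<alpha> (set (take (Suc p) P)) t T \<Longrightarrow> card T \<le> card (Tsel (P ! p))"
  shows "entries_maximal L K A \<alpha> Tsel (take m P @ t # drop m P)"
  unfolding entries_maximal_def
proof (intro allI impI)
  let ?Q = "take m P @ t # drop m P"
  fix k
  assume "k < length ?Q"
  then have "k \<le> length P"
    by simp
  consider "k < m" | "k = m" | "m < k"
    by linarith
  then show "is_max_among L K A \<alpha> (set (take k ?Q)) (?Q ! k) (Tsel (?Q ! k))"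
  proof cases
    case 1
    then show ?thesis
      using maximal \<open>m \<le> length P\<close> by (simp add: entries_maximal_def nth_append)
  next
    case 2
    then show ?thesis
      using new \<open>m \<le> length P\<close> by (simp add: nth_append)
  next
    case 3
    then obtain p where p: "k = Suc p" "m \<le> p" "p < length P"
      using \<open>k \<le> length P\<close> by (cases k) auto
    have "take (Suc p) P = take p P @ [P ! p]"
      using \<open>p < length P\<close> by (simp add: take_Suc_conv_app_nth)
    then have "is_max_among L K A \<alpha> (insert t (set (take p P))) (P ! p) (Tsel (P ! p))"
      using maximal passed[OF p(2,3)] p(3)
      by (intro is_max_among_insert) (auto simp: entries_maximal_def insert_commute)
    then show ?thesis
      using insert_at_after_nth[OF p(2,3)] p(1) by simp
  qed
qed

lemma rep_run_init: "rep_run L K A \<alpha> ord Tsel mstar \<Longrightarrow> ord 0 = []"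
  unfolding rep_run_def by blast

lemma rep_run_mstar:
  "rep_run L K A \<alpha> ord Tsel mstar \<Longrightarrow> 1 \<le> i \<Longrightarrow> mstar i = card (Tsel i)"
  unfolding rep_run_def by blast

lemma rep_run_step:
  assumes "rep_run L K A \<alpha> ord Tsel mstar"
  obtains m where "m \<le> n"
    and "ord (Suc n) = take m (ord n) @ Suc n # drop m (ord n)"
    and "is_max_among L K A \<alpha> (set (take m (ord n))) (Suc n) (Tsel (Suc n))"
    and "\<And>p. m \<le> p \<Longrightarrow> p < n \<Longrightarrow> \<exists>T.
           is_max_among L K A \<alpha> (set (take (Suc p) (ord n))) (Suc n) T \<and> card T \<le> mstar (ord n ! p)"
proof -
  obtain j where j: "1 \<le> j" "j \<le> Suc n"
    and ord: "ord (Suc n) = take (j - 1) (ord n) @ [Suc n] @ drop (j - 1) (ord n)"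
    and passed: "\<forall>j'. j < j' \<and> j' \<le> Suc n \<longrightarrow>
       (\<exists>T. is_max_set L K A \<alpha> (take (j' - 1) (ord n) @ [Suc n]) T \<and> card T \<le> mstar (ord n ! (j' - 2)))"
    and new: "is_max_set L K A \<alpha> (take (j - 1) (ord n) @ [Suc n]) (Tsel (Suc n))"
  proof -
    have "1 \<le> Suc n"
      by simp
    from assms[unfolded rep_run_def, THEN conjunct2, rule_format, OF this, unfolded diff_Suc_1]
    show thesis
      by (elim exE conjE) (rule that)
  qed
  show ?thesis
  proof (rule that[of "j - 1"])
    fix p assume "j - 1 \<le> p" "p < n"
    then show "\<exists>T. is_max_among L K A \<alpha> (set (take (Suc p) (ord n))) (Suc n) T \<and>
        card T \<le> mstar (ord n ! p)"
      using passed[rule_format, of "Suc (Suc p)"] j by (simp add: is_max_set_snoc_iff)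
  qed (use j ord new in \<open>simp_all add: is_max_set_snoc_iff\<close>)
qed

lemma rep_run_length_set_ord:
  assumes run: "rep_run L K A \<alpha> ord Tsel mstar"
  shows "length (ord t) = t \<and> set (ord t) = {1..t}"
proof (induction t)
  case 0
  then show ?case
    using rep_run_init[OF run] by simp
next
  case (Suc n)
  obtain m where "m \<le> n" and ord: "ord (Suc n) = take m (ord n) @ Suc n # drop m (ord n)"
    using rep_run_step[OF run] by blast
  have "set (ord (Suc n)) = insert (Suc n) (set (take m (ord n)) \<union> set (drop m (ord n)))"
    unfolding ord by simp
  also have "\<dots> = insert (Suc n) (set (ord n))"
    by (metis append_take_drop_id set_append)
  finally have "set (ord (Suc n)) = {1..Suc n}"
    using Suc.IH by (simp add: atLeastAtMostSuc_conv)
  moreover have "length (ord (Suc n)) = Suc n"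
    using Suc.IH \<open>m \<le> n\<close> by (simp add: ord)
  ultimately show ?case
    by blast
qed

lemma rep_run_entries_maximal:
  assumes run: "rep_run L K A \<alpha> ord Tsel mstar"
  shows "entries_maximal L K A \<alpha> Tsel (ord t)"
proof (induction t)
  case 0
  then show ?case
    using rep_run_init[OF run] by (simp add: entries_maximal_def)
next
  case (Suc n)
  obtain m where "m \<le> n" and ord: "ord (Suc n) = take m (ord n) @ Suc n # drop m (ord n)"
    and new: "is_max_among L K A \<alpha> (set (take m (ord n))) (Suc n) (Tsel (Suc n))"
    and passed: "\<And>p. m \<le> p \<Longrightarrow> p < n \<Longrightarrow> \<exists>T.
      is_max_among L K A \<alpha> (set (take (Suc p) (ord n))) (Suc n) T \<and> card T \<le> mstar (ord n ! p)"
    using rep_run_step[OF run] by blast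
  have length: "length (ord n) = n" and "set (ord n) = {1..n}"
    using rep_run_length_set_ord[OF run] by blast+
  have bound: "card T \<le> card (Tsel (ord n ! p))"
    if "m \<le> p" "p < n" and feasible: "feasible_among L K A \<alpha> (set (take (Suc p) (ord n))) (Suc n) T"
    for p T
  proof -
    obtain T' where T': "is_max_among L K A \<alpha> (set (take (Suc p) (ord n))) (Suc n) T'"
      and "card T' \<le> mstar (ord n ! p)"
      using passed[OF \<open>m \<le> p\<close> \<open>p < n\<close>] by blast
    have "1 \<le> ord n ! p"
      using nth_mem[of p "ord n"] \<open>set (ord n) = {1..n}\<close> \<open>p < n\<close> length by auto
    then have "card T' \<le> card (Tsel (ord n ! p))"
      using \<open>card T' \<le> mstar (ord n ! p)\<close> rep_run_mstar[OF run] by simp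
    moreover have "card T \<le> card T'"
      using T' feasible by (rule is_max_among_card_le)
    ultimately show ?thesis
      by simp
  qed
  show ?case
    unfolding ord using entries_maximal_insert_at[OF Suc.IH _ new] bound \<open>m \<le> n\<close> length
    by simp
qed

theorem mainTheorem18:
  fixes L :: "nat \<Rightarrow> 'u set" and A :: "nat \<Rightarrow> 'u set" and K :: nat and \<alpha> :: real
    and ord :: "nat \<Rightarrow> nat list" and Tsel :: "nat \<Rightarrow> 'u set" and mstar :: "nat \<Rightarrow> nat"
  assumes "countable (UNIV :: 'u set)" and "infinite (UNIV :: 'u set)"
    and "\<forall>i\<ge>1. infinite (L i)"
    and "is_partition K A"
    and "0 \<le> \<alpha>" and "\<alpha> \<le> 1"
    and "rep_run L K A \<alpha> ord Tsel mstar"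
  shows "\<forall>i\<ge>1. \<forall>t\<ge>i. \<forall>k. k < length (ord t) \<and> ord t ! k = i \<longrightarrow>
           is_max_set L K A \<alpha> (take (Suc k) (ord t)) (Tsel i)"
proof (intro allI impI)
  fix i t k
  assume k: "k < length (ord t) \<and> ord t ! k = i"
  then have "take (Suc k) (ord t) = take k (ord t) @ [i]"
    by (auto simp: take_Suc_conv_app_nth)
  moreover have "is_max_among L K A \<alpha> (set (take k (ord t))) i (Tsel i)"
    using rep_run_entries_maximal[OF assms(7), of t] k unfolding entries_maximal_def by blast
  ultimately show "is_max_set L K A \<alpha> (take (Suc k) (ord t)) (Tsel i)"
    by (simp add: is_max_set_snoc_iff)
qed

end
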